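(* Let $\mathcal{A}$ be an abelian category and $\alpha$ an amplitude on $\mathcal{A}$. Then $\alpha(A)=\mathrm{d}_\alpha(A,0)$ for every $A\in\operatorname{ob}\mathcal{A}$.
   Context: An amplitude on an abelian category $\mathcal{A}$ is a function $\alpha\colon\operatorname{ob}\mathcal{A}\to[0,\infty]$ with $\alpha(0)=0$ such that for every short exact sequence $0\to A\to B\to C\to0$, $\alpha(A)\le\alpha(B)$, $\alpha(C)\le\alpha(B)$ and $\alpha(B)\le\alpha(A)+\alpha(C)$. The cost of a zigzag $A\xleftarrow{\gamma_1}C_1\xrightarrow{\gamma_2}\cdots\xleftarrow{\gamma_{n-1}}C_n\xrightarrow{\gamma_n}B$ is $\sum_i\alpha(\ker\gamma_i)+\alpha(\operatorname{coker}\gamma_i)$; the path metric $\mathrm{d}_\alpha(A,B)$ is the infimum of costs over all zigzags between $A$ and $B$ ($\inf\emptyset=\infty$). *)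

theory Defs
  imports Main "HOL-Library.Extended_Nonnegative_Real"
begin

record ('o, 'm) cat =
  Obj :: "'o set"
  Arr :: "'m set"
  Dom :: "'m \<Rightarrow> 'o"
  Cod :: "'m \<Rightarrow> 'o"
  Id  :: "'o \<Rightarrow> 'm"
  Comp :: "'m \<Rightarrow> 'm \<Rightarrow> 'm"   (* Comp C g f = g \<circ> f *)

definition hom :: "('o, 'm) cat \<Rightarrow> 'o \<Rightarrow> 'o \<Rightarrow> 'm set" where
  "hom C a b = {f \<in> Arr C. Dom C f = a \<and> Cod C f = b}"

definition category :: "('o, 'm) cat \<Rightarrow> bool" where
  "category C \<longleftrightarrow>
     (\<forall>f \<in> Arr C. Dom C f \<in> Obj C \<and> Cod C f \<in> Obj C) \<and>
     (\<forall>a \<in> Obj C. Id C a \<in> hom C a a) \<and>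
     (\<forall>f \<in> Arr C. \<forall>g \<in> Arr C. Dom C g = Cod C f \<longrightarrow>
         Comp C g f \<in> hom C (Dom C f) (Cod C g)) \<and>
     (\<forall>f \<in> Arr C. \<forall>g \<in> Arr C. \<forall>h \<in> Arr C. Dom C g = Cod C f \<and> Dom C h = Cod C g \<longrightarrow>
         Comp C h (Comp C g f) = Comp C (Comp C h g) f) \<and>
     (\<forall>f \<in> Arr C. Comp C (Id C (Cod C f)) f = f \<and> Comp C f (Id C (Dom C f)) = f)"

definition zero_obj :: "('o, 'm) cat \<Rightarrow> 'o \<Rightarrow> bool" where
  "zero_obj C z \<longleftrightarrow> z \<in> Obj C \<and>
     (\<forall>a \<in> Obj C. (\<exists>!f. f \<in> hom C a z) \<and> (\<exists>!f. f \<in> hom C z a))"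

definition is_zero_arr :: "('o, 'm) cat \<Rightarrow> 'm \<Rightarrow> bool" where
  "is_zero_arr C f \<longleftrightarrow> f \<in> Arr C \<and>
     (\<exists>z g h. zero_obj C z \<and> g \<in> hom C (Dom C f) z \<and> h \<in> hom C z (Cod C f) \<and> f = Comp C h g)"

definition mono :: "('o, 'm) cat \<Rightarrow> 'm \<Rightarrow> bool" where
  "mono C f \<longleftrightarrow> f \<in> Arr C \<and>
     (\<forall>g \<in> Arr C. \<forall>h \<in> Arr C. Cod C g = Dom C f \<and> Cod C h = Dom C f \<and> Dom C g = Dom C h
        \<and> Comp C f g = Comp C f h \<longrightarrow> g = h)"

definition epi :: "('o, 'm) cat \<Rightarrow> 'm \<Rightarrow> bool" where
  "epi C f \<longleftrightarrow> f \<in> Arr C \<and>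
     (\<forall>g \<in> Arr C. \<forall>h \<in> Arr C. Dom C g = Cod C f \<and> Dom C h = Cod C f \<and> Cod C g = Cod C h
        \<and> Comp C g f = Comp C h f \<longrightarrow> g = h)"

definition is_kernel :: "('o, 'm) cat \<Rightarrow> 'm \<Rightarrow> 'm \<Rightarrow> bool" where
  "is_kernel C f k \<longleftrightarrow> f \<in> Arr C \<and> k \<in> Arr C \<and> Cod C k = Dom C f \<and>
     is_zero_arr C (Comp C f k) \<and>
     (\<forall>g \<in> Arr C. Cod C g = Dom C f \<and> is_zero_arr C (Comp C f g) \<longrightarrow>
        (\<exists>!u. u \<in> hom C (Dom C g) (Dom C k) \<and> Comp C k u = g))"

definition is_cokernel :: "('o, 'm) cat \<Rightarrow> 'm \<Rightarrow> 'm \<Rightarrow> bool" where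
  "is_cokernel C f c \<longleftrightarrow> f \<in> Arr C \<and> c \<in> Arr C \<and> Dom C c = Cod C f \<and>
     is_zero_arr C (Comp C c f) \<and>
     (\<forall>g \<in> Arr C. Dom C g = Cod C f \<and> is_zero_arr C (Comp C g f) \<longrightarrow>
        (\<exists>!u. u \<in> hom C (Cod C c) (Cod C g) \<and> Comp C u c = g))"

definition is_product :: "('o, 'm) cat \<Rightarrow> 'o \<Rightarrow> 'o \<Rightarrow> 'o \<Rightarrow> 'm \<Rightarrow> 'm \<Rightarrow> bool" where
  "is_product C a b p p1 p2 \<longleftrightarrow> p \<in> Obj C \<and> p1 \<in> hom C p a \<and> p2 \<in> hom C p b \<and>
     (\<forall>x \<in> Obj C. \<forall>f \<in> hom C x a. \<forall>g \<in> hom C x b.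
        \<exists>!u. u \<in> hom C x p \<and> Comp C p1 u = f \<and> Comp C p2 u = g)"

definition is_coproduct :: "('o, 'm) cat \<Rightarrow> 'o \<Rightarrow> 'o \<Rightarrow> 'o \<Rightarrow> 'm \<Rightarrow> 'm \<Rightarrow> bool" where
  "is_coproduct C a b s i1 i2 \<longleftrightarrow> s \<in> Obj C \<and> i1 \<in> hom C a s \<and> i2 \<in> hom C b s \<and>
     (\<forall>x \<in> Obj C. \<forall>f \<in> hom C a x. \<forall>g \<in> hom C b x.
        \<exists>!u. u \<in> hom C s x \<and> Comp C u i1 = f \<and> Comp C u i2 = g)"

text \<open>Abelian category (Freyd / Mac Lane, VIII.3): a category with a zero object, all binary
  products and coproducts, all kernels and cokernels, in which every monomorphism is a kernel
  and every epimorphism is a cokernel.  (The additive structure is then uniquely determined.)\<close>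
definition abelian_category :: "('o, 'm) cat \<Rightarrow> bool" where
  "abelian_category C \<longleftrightarrow> category C \<and>
     (\<exists>z. zero_obj C z) \<and>
     (\<forall>a \<in> Obj C. \<forall>b \<in> Obj C. \<exists>p p1 p2. is_product C a b p p1 p2) \<and>
     (\<forall>a \<in> Obj C. \<forall>b \<in> Obj C. \<exists>s i1 i2. is_coproduct C a b s i1 i2) \<and>
     (\<forall>f \<in> Arr C. (\<exists>k. is_kernel C f k) \<and> (\<exists>c. is_cokernel C f c)) \<and>
     (\<forall>f. mono C f \<longrightarrow> (\<exists>g. is_kernel C g f)) \<and>
     (\<forall>f. epi C f \<longrightarrow> (\<exists>g. is_cokernel C g f))"

definition short_exact :: "('o, 'm) cat \<Rightarrow> 'm \<Rightarrow> 'm \<Rightarrow> bool" where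
  "short_exact C f g \<longleftrightarrow> is_kernel C g f \<and> is_cokernel C f g"

definition amplitude :: "('o, 'm) cat \<Rightarrow> ('o \<Rightarrow> ennreal) \<Rightarrow> bool" where
  "amplitude C \<alpha> \<longleftrightarrow>
     (\<forall>z. zero_obj C z \<longrightarrow> \<alpha> z = 0) \<and>
     (\<forall>f g. short_exact C f g \<longrightarrow>
        \<alpha> (Dom C f) \<le> \<alpha> (Cod C f) \<and> \<alpha> (Cod C g) \<le> \<alpha> (Cod C f) \<and>
        \<alpha> (Cod C f) \<le> \<alpha> (Dom C f) + \<alpha> (Cod C g))"

text \<open>Amplitude of the kernel / cokernel object of an arrow (well defined up to isomorphism,
  and amplitudes are isomorphism invariant).\<close>
definition amp_ker :: "('o, 'm) cat \<Rightarrow> ('o \<Rightarrow> ennreal) \<Rightarrow> 'm \<Rightarrow> ennreal" where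
  "amp_ker C \<alpha> f = \<alpha> (Dom C (SOME k. is_kernel C f k))"

definition amp_coker :: "('o, 'm) cat \<Rightarrow> ('o \<Rightarrow> ennreal) \<Rightarrow> 'm \<Rightarrow> ennreal" where
  "amp_coker C \<alpha> f = \<alpha> (Cod C (SOME c. is_cokernel C f c))"

text \<open>A zigzag A \<leftarrow> C_1 \<rightarrow> X_1 \<leftarrow> C_2 \<rightarrow> ... \<leftarrow> C_n \<rightarrow> B is a nonempty list of spans
  (l_i, r_i) with Dom l_i = Dom r_i = C_i, Cod l_1 = A, Cod r_n = B and Cod r_i = Cod l_(i+1).\<close>
definition zigzag :: "('o, 'm) cat \<Rightarrow> 'o \<Rightarrow> 'o \<Rightarrow> ('m \<times> 'm) list \<Rightarrow> bool" where
  "zigzag C A B zs \<longleftrightarrow> zs \<noteq> [] \<and>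
     (\<forall>i < length zs. fst (zs ! i) \<in> Arr C \<and> snd (zs ! i) \<in> Arr C \<and>
        Dom C (fst (zs ! i)) = Dom C (snd (zs ! i))) \<and>
     Cod C (fst (hd zs)) = A \<and> Cod C (snd (last zs)) = B \<and>
     (\<forall>i. Suc i < length zs \<longrightarrow> Cod C (snd (zs ! i)) = Cod C (fst (zs ! Suc i)))"

definition zigzag_cost :: "('o, 'm) cat \<Rightarrow> ('o \<Rightarrow> ennreal) \<Rightarrow> ('m \<times> 'm) list \<Rightarrow> ennreal" where
  "zigzag_cost C \<alpha> zs =
     (\<Sum>p \<leftarrow> zs. amp_ker C \<alpha> (fst p) + amp_coker C \<alpha> (fst p)
               + amp_ker C \<alpha> (snd p) + amp_coker C \<alpha> (snd p))"

text \<open>Path metric; Inf of the empty set in ennreal is \<infinity>.\<close>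
definition path_dist :: "('o, 'm) cat \<Rightarrow> ('o \<Rightarrow> ennreal) \<Rightarrow> 'o \<Rightarrow> 'o \<Rightarrow> ennreal" where
  "path_dist C \<alpha> A B = Inf {zigzag_cost C \<alpha> zs | zs. zigzag C A B zs}"

end

(* Every arrow f of an abelian category factors as f = m e, where m is the kernel of the cokernel
   of f and e is an epimorphism; that e is epi is the one place where products are needed, to
   build the equalizer of two arrows u, v with u e = v e.  The short exact sequences
   0 -> ker f -> dom f -> im f -> 0 and 0 -> im f -> cod f -> coker f -> 0 then give
     alpha(dom f) <= alpha(ker f) + alpha(cod f)   and   alpha(cod f) <= alpha(dom f) + alpha(coker f).
   Applied to the two legs of a span A <- C -> B this bounds alpha(A) by alpha(B) plus the cost of
   the span, so along any zigzag from A to 0 we get alpha(A) <= cost.  Conversely the zigzag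
   A <- 0 -> 0 costs only alpha(coker(0 -> A)) <= alpha(A). *)

theory Submission
  imports Defs
begin

lemma in_hom_iff [simp]: "f \<in> hom C a b \<longleftrightarrow> f \<in> Arr C \<and> Dom C f = a \<and> Cod C f = b"
  by (simp add: hom_def)

locale categorical =
  fixes C :: "('o, 'm) cat"
  assumes category: "category C"
begin

abbreviation arr_comp :: "'m \<Rightarrow> 'm \<Rightarrow> 'm"  (infixr "\<cdot>" 55)
  where "g \<cdot> f \<equiv> Comp C g f"

lemma dom_in_Obj [simp]: "f \<in> Arr C \<Longrightarrow> Dom C f \<in> Obj C"
  and cod_in_Obj [simp]: "f \<in> Arr C \<Longrightarrow> Cod C f \<in> Obj C"
  and id_in_Arr [simp]: "a \<in> Obj C \<Longrightarrow> Id C a \<in> Arr C"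
  and dom_id [simp]: "a \<in> Obj C \<Longrightarrow> Dom C (Id C a) = a"
  and cod_id [simp]: "a \<in> Obj C \<Longrightarrow> Cod C (Id C a) = a"
  using category unfolding category_def by auto

lemma comp_in_Arr [simp]: "\<lbrakk>f \<in> Arr C; g \<in> Arr C; Dom C g = Cod C f\<rbrakk> \<Longrightarrow> g \<cdot> f \<in> Arr C"
  and dom_comp [simp]: "\<lbrakk>f \<in> Arr C; g \<in> Arr C; Dom C g = Cod C f\<rbrakk> \<Longrightarrow> Dom C (g \<cdot> f) = Dom C f"
  and cod_comp [simp]: "\<lbrakk>f \<in> Arr C; g \<in> Arr C; Dom C g = Cod C f\<rbrakk> \<Longrightarrow> Cod C (g \<cdot> f) = Cod C g"
  using category unfolding category_def by auto

lemma comp_assoc: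
  "\<lbrakk>f \<in> Arr C; g \<in> Arr C; h \<in> Arr C; Dom C g = Cod C f; Dom C h = Cod C g\<rbrakk>
    \<Longrightarrow> h \<cdot> g \<cdot> f = (h \<cdot> g) \<cdot> f"
  using category unfolding category_def by blast

lemma comp_id_left [simp]: "\<lbrakk>f \<in> Arr C; Cod C f = a\<rbrakk> \<Longrightarrow> Id C a \<cdot> f = f"
  and comp_id_right [simp]: "\<lbrakk>f \<in> Arr C; Dom C f = a\<rbrakk> \<Longrightarrow> f \<cdot> Id C a = f"
  using category unfolding category_def by auto

lemma mono_in_Arr: "mono C m \<Longrightarrow> m \<in> Arr C"
  by (simp add: mono_def)

lemma epi_in_Arr: "epi C e \<Longrightarrow> e \<in> Arr C"
  by (simp add: epi_def)

lemma monoI: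
  assumes "m \<in> Arr C"
    and "\<And>a b. \<lbrakk>a \<in> Arr C; b \<in> Arr C; Cod C a = Dom C m; Cod C b = Dom C m; m \<cdot> a = m \<cdot> b\<rbrakk>
           \<Longrightarrow> a = b"
  shows "mono C m"
  using assms unfolding mono_def by blast

lemma epiI:
  assumes "e \<in> Arr C"
    and "\<And>a b. \<lbrakk>a \<in> Arr C; b \<in> Arr C; Dom C a = Cod C e; Dom C b = Cod C e; a \<cdot> e = b \<cdot> e\<rbrakk>
           \<Longrightarrow> a = b"
  shows "epi C e"
  using assms unfolding epi_def by blast

lemma monoD:
  assumes "mono C m" "a \<in> Arr C" "b \<in> Arr C" "Cod C a = Dom C m" "Cod C b = Dom C m"
    and "m \<cdot> a = m \<cdot> b"
  shows "a = b"
proof -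
  have "Dom C a = Dom C b"
    using assms dom_comp[of a m] dom_comp[of b m] by (simp add: mono_in_Arr)
  with assms show ?thesis
    unfolding mono_def by blast
qed

lemma epiD:
  assumes "epi C e" "a \<in> Arr C" "b \<in> Arr C" "Dom C a = Cod C e" "Dom C b = Cod C e"
    and "a \<cdot> e = b \<cdot> e"
  shows "a = b"
proof -
  have "Cod C a = Cod C b"
    using assms cod_comp[of e a] cod_comp[of e b] by (simp add: epi_in_Arr)
  with assms show ?thesis
    unfolding epi_def by blast
qed

lemma mono_comp:
  assumes m: "mono C m" and j: "mono C j" and "Cod C j = Dom C m"
  shows "mono C (m \<cdot> j)"
proof (rule monoI)
  have arrs: "m \<in> Arr C" "j \<in> Arr C"
    using m j by (simp_all add: mono_in_Arr)
  then show "m \<cdot> j \<in> Arr C"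
    using assms(3) by simp
  fix a b
  assume ab: "a \<in> Arr C" "b \<in> Arr C" "Cod C a = Dom C (m \<cdot> j)" "Cod C b = Dom C (m \<cdot> j)"
    and "(m \<cdot> j) \<cdot> a = (m \<cdot> j) \<cdot> b"
  then have "m \<cdot> j \<cdot> a = m \<cdot> j \<cdot> b"
    using arrs assms(3) by (simp add: comp_assoc)
  then have "j \<cdot> a = j \<cdot> b"
    by (rule monoD[OF m, rotated -1]) (use ab arrs assms(3) in simp_all)
  then show "a = b"
    by (rule monoD[OF j, rotated -1]) (use ab arrs assms(3) in simp_all)
qed

lemma mono_if_left_inverse:
  assumes d: "d \<in> Arr C" and r: "r \<in> Arr C" "Dom C r = Cod C d" "r \<cdot> d = Id C (Dom C d)"
  shows "mono C d"
proof (rule monoI[OF d])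
  fix a b
  assume ab: "a \<in> Arr C" "b \<in> Arr C" "Cod C a = Dom C d" "Cod C b = Dom C d" "d \<cdot> a = d \<cdot> b"
  have "a = (r \<cdot> d) \<cdot> a"
    using ab r by simp
  also have "\<dots> = r \<cdot> d \<cdot> a"
    by (rule comp_assoc[symmetric]) (use ab d r in simp_all)
  also have "\<dots> = (r \<cdot> d) \<cdot> b"
    unfolding ab(5) by (rule comp_assoc) (use ab d r in simp_all)
  also have "\<dots> = b"
    using ab r by simp
  finally show "a = b" .
qed

lemma epi_if_right_inverse:
  assumes j: "j \<in> Arr C" and s: "s \<in> Arr C" "Cod C s = Dom C j" "j \<cdot> s = Id C (Cod C j)"
  shows "epi C j"
proof (rule epiI[OF j])
  fix a b
  assume ab: "a \<in> Arr C" "b \<in> Arr C" "Dom C a = Cod C j" "Dom C b = Cod C j" "a \<cdot> j = b \<cdot> j"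
  have "a = a \<cdot> j \<cdot> s"
    using ab s by simp
  also have "\<dots> = (a \<cdot> j) \<cdot> s"
    by (rule comp_assoc) (use ab j s in simp_all)
  also have "\<dots> = b \<cdot> j \<cdot> s"
    unfolding ab(5) by (rule comp_assoc[symmetric]) (use ab j s in simp_all)
  also have "\<dots> = b"
    using ab s by simp
  finally show "a = b" .
qed

section \<open>Zero arrows\<close>

lemma zero_obj_in_Obj: "zero_obj C z \<Longrightarrow> z \<in> Obj C"
  by (simp add: zero_obj_def)

lemma ex_arr_from_zero_obj: "\<lbrakk>zero_obj C z; a \<in> Obj C\<rbrakk> \<Longrightarrow> \<exists>f. f \<in> hom C z a"
  unfolding zero_obj_def by blast

lemma arrs_to_zero_obj_eq:
  "\<lbrakk>zero_obj C z; f \<in> hom C a z; g \<in> hom C a z\<rbrakk> \<Longrightarrow> f = g"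
  unfolding zero_obj_def by (metis in_hom_iff dom_in_Obj)

lemma arrs_from_zero_obj_eq:
  "\<lbrakk>zero_obj C z; f \<in> hom C z b; g \<in> hom C z b\<rbrakk> \<Longrightarrow> f = g"
  unfolding zero_obj_def by (metis in_hom_iff cod_in_Obj)

lemma zero_arrE:
  assumes "is_zero_arr C f"
  obtains z g h where "zero_obj C z" "g \<in> Arr C" "h \<in> Arr C" "Cod C g = z" "Dom C h = z"
    "f = h \<cdot> g"
  using assms unfolding is_zero_arr_def by auto

lemma zero_arrI:
  "\<lbrakk>zero_obj C z; g \<in> Arr C; h \<in> Arr C; Cod C g = z; Dom C h = z\<rbrakk> \<Longrightarrow> is_zero_arr C (h \<cdot> g)"
  unfolding is_zero_arr_def by auto

lemma zero_arr_comp_right: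
  assumes f: "is_zero_arr C f" and x: "x \<in> Arr C" "Cod C x = Dom C f"
  shows "is_zero_arr C (f \<cdot> x)"
proof -
  obtain z g h where gh: "zero_obj C z" "g \<in> Arr C" "h \<in> Arr C" "Cod C g = z" "Dom C h = z"
    "f = h \<cdot> g"
    using f by (rule zero_arrE)
  with x have "f \<cdot> x = h \<cdot> g \<cdot> x"
    by (simp add: comp_assoc)
  with gh x show ?thesis
    by (simp add: zero_arrI)
qed

lemma zero_arr_comp_left:
  assumes f: "is_zero_arr C f" and x: "x \<in> Arr C" "Dom C x = Cod C f"
  shows "is_zero_arr C (x \<cdot> f)"
proof -
  obtain z g h where gh: "zero_obj C z" "g \<in> Arr C" "h \<in> Arr C" "Cod C g = z" "Dom C h = z"
    "f = h \<cdot> g"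
    using f by (rule zero_arrE)
  with x have "x \<cdot> f = (x \<cdot> h) \<cdot> g"
    by (simp add: comp_assoc)
  with gh x show ?thesis
    by (simp add: zero_arrI)
qed

text \<open>The factorizations through zero objects \<open>z\<close> and \<open>z'\<close> are matched up by the unique arrow
  \<open>z \<rightarrow> z'\<close>.\<close>
lemma zero_arr_unique:
  assumes f: "is_zero_arr C f" and f': "is_zero_arr C f'"
    and "Dom C f' = Dom C f" "Cod C f' = Cod C f"
  shows "f' = f"
proof -
  obtain z g h where gh: "zero_obj C z" "g \<in> Arr C" "h \<in> Arr C" "Cod C g = z" "Dom C h = z"
    "f = h \<cdot> g"
    using f by (rule zero_arrE)
  obtain z' g' h' where gh': "zero_obj C z'" "g' \<in> Arr C" "h' \<in> Arr C" "Cod C g' = z'"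
    "Dom C h' = z'" "f' = h' \<cdot> g'"
    using f' by (rule zero_arrE)
  have ends: "Dom C g' = Dom C g" "Cod C h' = Cod C h"
    using assms(3,4) gh gh' by simp_all
  obtain p where p: "p \<in> hom C z z'"
    using ex_arr_from_zero_obj[OF gh(1) zero_obj_in_Obj[OF gh'(1)]] by blast
  have "f' = h' \<cdot> p \<cdot> g"
    using arrs_to_zero_obj_eq[OF gh'(1), of g' "Dom C g" "p \<cdot> g"] gh gh'(2,4,6) ends p by simp
  also have "\<dots> = (h' \<cdot> p) \<cdot> g"
    by (rule comp_assoc) (use gh gh' p in simp_all)
  also have "\<dots> = f"
    using arrs_from_zero_obj_eq[OF gh(1), of h "Cod C h" "h' \<cdot> p"] gh gh'(3,5) ends p by simp
  finally show ?thesis .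
qed

lemma zero_arr_cancel_mono:
  assumes m: "mono C m" and g: "g \<in> Arr C" "Cod C g = Dom C m" and mg: "is_zero_arr C (m \<cdot> g)"
  shows "is_zero_arr C g"
proof -
  have "m \<in> Arr C"
    using m by (rule mono_in_Arr)
  obtain z t h where th: "zero_obj C z" "t \<in> Arr C" "h \<in> Arr C" "Cod C t = z" "Dom C h = z"
    "m \<cdot> g = h \<cdot> t"
    using mg by (rule zero_arrE)
  have "Dom C t = Dom C g"
    using dom_comp[of g m] dom_comp[of t h] th g \<open>m \<in> Arr C\<close> by simp
  with th have t: "zero_obj C z" "t \<in> hom C (Dom C g) z"
    by simp_all
  obtain s where s: "s \<in> hom C z (Cod C g)"
    using ex_arr_from_zero_obj[OF t(1) cod_in_Obj[OF g(1)]] by blast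
  have zero: "is_zero_arr C (s \<cdot> t)"
    using t s by (simp add: zero_arrI)
  have "m \<cdot> g = m \<cdot> s \<cdot> t"
    by (rule zero_arr_unique[OF zero_arr_comp_left[OF zero \<open>m \<in> Arr C\<close>] mg])
      (use t s g \<open>m \<in> Arr C\<close> in simp_all)
  then have "g = s \<cdot> t"
    by (rule monoD[OF m, rotated -1]) (use g t s in simp_all)
  with zero show ?thesis
    by simp
qed

section \<open>Kernels, cokernels and products\<close>

lemma kernelD:
  assumes "is_kernel C f k"
  shows "k \<in> Arr C" "f \<in> Arr C" "Cod C k = Dom C f" "is_zero_arr C (f \<cdot> k)"
  using assms unfolding is_kernel_def by auto

lemma kernel_lift:
  assumes "is_kernel C f k" "g \<in> Arr C" "Cod C g = Dom C f" "is_zero_arr C (f \<cdot> g)"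
  shows "\<exists>!u. u \<in> hom C (Dom C g) (Dom C k) \<and> k \<cdot> u = g"
  using assms unfolding is_kernel_def by blast

lemma cokernelD:
  assumes "is_cokernel C f c"
  shows "c \<in> Arr C" "f \<in> Arr C" "Dom C c = Cod C f" "is_zero_arr C (c \<cdot> f)"
  using assms unfolding is_cokernel_def by auto

lemma cokernel_desc:
  assumes "is_cokernel C f c" "g \<in> Arr C" "Dom C g = Cod C f" "is_zero_arr C (g \<cdot> f)"
  shows "\<exists>!u. u \<in> hom C (Cod C c) (Cod C g) \<and> u \<cdot> c = g"
  using assms unfolding is_cokernel_def by blast

lemma kernel_mono:
  assumes k: "is_kernel C f k"
  shows "mono C k"
proof (rule monoI)
  note k' = kernelD[OF k]
  show "k \<in> Arr C"
    by (fact k'(1))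
  fix a b
  assume ab: "a \<in> Arr C" "b \<in> Arr C" "Cod C a = Dom C k" "Cod C b = Dom C k" "k \<cdot> a = k \<cdot> b"
  have "f \<cdot> k \<cdot> a = (f \<cdot> k) \<cdot> a"
    by (rule comp_assoc) (use ab k' in simp_all)
  then have "is_zero_arr C (f \<cdot> k \<cdot> a)"
    using zero_arr_comp_right[OF k'(4) ab(1)] ab(3) k' by simp
  then have "\<exists>!u. u \<in> hom C (Dom C a) (Dom C k) \<and> k \<cdot> u = k \<cdot> a"
    using kernel_lift[OF k, of "k \<cdot> a"] ab(1,3) k' by simp
  moreover have "Dom C b = Dom C a"
    using dom_comp[of a k] dom_comp[of b k] ab k' by simp
  ultimately show "a = b"
    using ab by auto
qed

lemma kernel_of_factor:
  assumes k: "is_kernel C f k" and m: "mono C m"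
    and e: "e \<in> Arr C" "Cod C e = Dom C m" "m \<cdot> e = f"
  shows "is_kernel C e k"
proof -
  note k' = kernelD[OF k]
  have m_arr: "m \<in> Arr C"
    using m by (rule mono_in_Arr)
  have dom_e: "Dom C e = Dom C f"
    using dom_comp[of e m] e m_arr by simp
  have "m \<cdot> e \<cdot> k = f \<cdot> k"
    unfolding e(3)[symmetric] by (rule comp_assoc) (use e m_arr k' dom_e in simp_all)
  then have "is_zero_arr C (e \<cdot> k)"
    using zero_arr_cancel_mono[OF m, of "e \<cdot> k"] e k' dom_e by simp
  moreover have "\<exists>!u. u \<in> hom C (Dom C g) (Dom C k) \<and> k \<cdot> u = g"
    if g: "g \<in> Arr C" "Cod C g = Dom C e" "is_zero_arr C (e \<cdot> g)" for g
  proof -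
    have "f \<cdot> g = m \<cdot> e \<cdot> g"
      unfolding e(3)[symmetric] by (rule comp_assoc[symmetric]) (use e m_arr g in simp_all)
    then have "is_zero_arr C (f \<cdot> g)"
      using zero_arr_comp_left[OF g(3) m_arr] e g by simp
    then show ?thesis
      using kernel_lift[OF k g(1)] g(2) dom_e by simp
  qed
  ultimately show ?thesis
    unfolding is_kernel_def using e(1) k' dom_e by auto
qed

lemma short_exact_kernel_of_cokernel:
  assumes c: "is_cokernel C f c" and m: "is_kernel C c m"
  shows "short_exact C m c"
proof -
  note c' = cokernelD[OF c] and m' = kernelD[OF m]
  obtain e where e: "e \<in> hom C (Dom C f) (Dom C m)" "m \<cdot> e = f"
    using kernel_lift[OF m c'(2)] c' by auto
  have "\<exists>!u. u \<in> hom C (Cod C c) (Cod C x) \<and> u \<cdot> c = x"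
    if x: "x \<in> Arr C" "Dom C x = Cod C m" "is_zero_arr C (x \<cdot> m)" for x
  proof -
    have "x \<cdot> f = (x \<cdot> m) \<cdot> e"
      unfolding e(2)[symmetric] by (rule comp_assoc) (use e m' x in simp_all)
    then have "is_zero_arr C (x \<cdot> f)"
      using zero_arr_comp_right[OF x(3), of e] e m' x by simp
    then show ?thesis
      using cokernel_desc[OF c x(1)] x(2) m' c' by simp
  qed
  then have "is_cokernel C m c"
    unfolding is_cokernel_def using m' by auto
  with m show ?thesis
    unfolding short_exact_def by simp
qed

lemma productD:
  assumes "is_product C a b p p1 p2"
  shows "p1 \<in> hom C p a" "p2 \<in> hom C p b"
  using assms unfolding is_product_def by auto

lemma product_pairing:
  assumes "is_product C a b p p1 p2" "f \<in> hom C x a" "g \<in> hom C x b"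
  obtains u where "u \<in> hom C x p" "p1 \<cdot> u = f" "p2 \<cdot> u = g"
proof -
  have "x \<in> Obj C"
    using assms(2) by auto
  with assms that show ?thesis
    unfolding is_product_def by blast
qed

lemma product_arr_eqI:
  assumes P: "is_product C a b p p1 p2" and uv: "u \<in> hom C x p" "v \<in> hom C x p"
    and "p1 \<cdot> u = p1 \<cdot> v" "p2 \<cdot> u = p2 \<cdot> v"
  shows "u = v"
proof -
  have "x \<in> Obj C" "p1 \<cdot> u \<in> hom C x a" "p2 \<cdot> u \<in> hom C x b"
    using productD[OF P] uv by auto
  then have "\<exists>!w. w \<in> hom C x p \<and> p1 \<cdot> w = p1 \<cdot> u \<and> p2 \<cdot> w = p2 \<cdot> u"
    using P unfolding is_product_def by blast
  with assms show ?thesis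
    by auto
qed

lemma product_diagonal:
  assumes P: "is_product C a a p p1 p2" and a: "a \<in> Obj C"
  obtains d where "d \<in> hom C a p" "p1 \<cdot> d = Id C a" "p2 \<cdot> d = Id C a" "mono C d"
proof -
  obtain d where d: "d \<in> hom C a p" "p1 \<cdot> d = Id C a" "p2 \<cdot> d = Id C a"
    using product_pairing[OF P, of "Id C a" a "Id C a"] a by auto
  moreover have "mono C d"
    using d productD[OF P] by (intro mono_if_left_inverse[of d p1]) auto
  ultimately show ?thesis
    using that by blast
qed

end

section \<open>Equalizers and images in abelian categories\<close>

locale abelian =
  fixes C :: "('o, 'm) cat"
  assumes abelian: "abelian_category C"

sublocale abelian \<subseteq> categorical
  using abelian by unfold_locales (simp add: abelian_category_def)

context abelian
begin

lemma ex_kernel: "f \<in> Arr C \<Longrightarrow> \<exists>k. is_kernel C f k"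
  and ex_cokernel: "f \<in> Arr C \<Longrightarrow> \<exists>c. is_cokernel C f c"
  and mono_is_kernel: "mono C m \<Longrightarrow> \<exists>g. is_kernel C g m"
  and epi_is_cokernel: "epi C e \<Longrightarrow> \<exists>g. is_cokernel C g e"
  and ex_product: "\<lbrakk>a \<in> Obj C; b \<in> Obj C\<rbrakk> \<Longrightarrow> \<exists>p p1 p2. is_product C a b p p1 p2"
  using abelian unfolding abelian_category_def by blast+

text \<open>The equalizer of \<open>u\<close> and \<open>v\<close> is the kernel of \<open>q \<cdot> \<langle>u, v\<rangle>\<close>, where the diagonal
  \<open>\<langle>id, id\<rangle>\<close>, being a monomorphism, is the kernel of \<open>q\<close>.\<close>
lemma equalizer_exists:
  assumes u: "u \<in> Arr C" and v: "v \<in> Arr C" "Dom C v = Dom C u" "Cod C v = Cod C u"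
  obtains j where "mono C j" "Cod C j = Dom C u" "u \<cdot> j = v \<cdot> j"
    and "\<And>x. \<lbrakk>x \<in> Arr C; Cod C x = Dom C u; u \<cdot> x = v \<cdot> x\<rbrakk>
           \<Longrightarrow> \<exists>y. y \<in> hom C (Dom C x) (Dom C j) \<and> j \<cdot> y = x"
proof -
  define W where "W = Cod C u"
  have W: "W \<in> Obj C"
    using u W_def by simp
  obtain P p1 p2 where P: "is_product C W W P p1 p2"
    using ex_product[OF W W] by blast
  note p = productD[OF P]
  obtain d where d: "d \<in> hom C W P" "p1 \<cdot> d = Id C W" "p2 \<cdot> d = Id C W" "mono C d"
    by (rule product_diagonal[OF P W])
  obtain q where q: "is_kernel C q d"
    using mono_is_kernel[OF d(4)] by blast
  note q' = kernelD[OF q]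
  obtain w where w: "w \<in> hom C (Dom C u) P" "p1 \<cdot> w = u" "p2 \<cdot> w = v"
    using product_pairing[OF P, of u "Dom C u" v] u v W_def by auto
  have qw: "q \<cdot> w \<in> Arr C" "Dom C (q \<cdot> w) = Dom C u"
    using q' d w by auto
  obtain j where j: "is_kernel C (q \<cdot> w) j"
    using ex_kernel qw by blast
  note j' = kernelD[OF j]
  show thesis
  proof
    show "mono C j"
      using j by (rule kernel_mono)
    show "Cod C j = Dom C u"
      using j' qw by simp
    have "is_zero_arr C (q \<cdot> w \<cdot> j)"
      using j' q' d w by (simp add: comp_assoc)
    then obtain t where t: "t \<in> hom C (Dom C j) W" "d \<cdot> t = w \<cdot> j"
      using kernel_lift[OF q, of "w \<cdot> j"] j' q' d w qw by auto
    have "p1 \<cdot> w \<cdot> j = p2 \<cdot> w \<cdot> j"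
      using t(1) t(2)[symmetric] p d by (simp add: comp_assoc)
    then show "u \<cdot> j = v \<cdot> j"
      using p w j' qw by (simp add: comp_assoc)
  next
    fix x
    assume x: "x \<in> Arr C" "Cod C x = Dom C u" "u \<cdot> x = v \<cdot> x"
    have "(q \<cdot> w) \<cdot> x = q \<cdot> w \<cdot> x"
      by (rule comp_assoc[symmetric]) (use x q' d w in simp_all)
    also have "w \<cdot> x = d \<cdot> u \<cdot> x"
      by (rule product_arr_eqI[OF P]) (use x u v d w p in \<open>simp_all add: W_def comp_assoc\<close>)
    also have "q \<cdot> d \<cdot> u \<cdot> x = (q \<cdot> d) \<cdot> u \<cdot> x"
      by (rule comp_assoc) (use x(1,2) u q' d in \<open>simp_all add: W_def\<close>)
    finally have "is_zero_arr C ((q \<cdot> w) \<cdot> x)"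
      using zero_arr_comp_right[OF q'(4), of "u \<cdot> x"] x(1,2) u d q' by (simp add: W_def)
    then show "\<exists>y. y \<in> hom C (Dom C x) (Dom C j) \<and> j \<cdot> y = x"
      using kernel_lift[OF j x(1)] x qw by auto
  qed
qed

lemma image_least_subobject:
  assumes c: "is_cokernel C f c" and m: "is_kernel C c m"
    and n: "mono C n" and t: "t \<in> Arr C" "Cod C t = Dom C n" "n \<cdot> t = f"
  shows "\<exists>s. s \<in> hom C (Dom C m) (Dom C n) \<and> n \<cdot> s = m"
proof -
  note c' = cokernelD[OF c] and m' = kernelD[OF m]
  have n_arr: "n \<in> Arr C"
    using n by (rule mono_in_Arr)
  have cod_n: "Cod C n = Cod C f"
    using cod_comp[of t n] t n_arr by simp
  obtain g where g: "is_kernel C g n"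
    using mono_is_kernel[OF n] by blast
  note g' = kernelD[OF g]
  have "g \<cdot> f = (g \<cdot> n) \<cdot> t"
    unfolding t(3)[symmetric] by (rule comp_assoc) (use t n_arr g' in simp_all)
  then have "is_zero_arr C (g \<cdot> f)"
    using zero_arr_comp_right[OF g'(4) t(1)] t(2) g' by simp
  then obtain h where h: "h \<in> hom C (Cod C c) (Cod C g)" "h \<cdot> c = g"
    using cokernel_desc[OF c g'(2)] g' cod_n by auto
  have "g \<cdot> m = h \<cdot> c \<cdot> m"
    unfolding h(2)[symmetric] by (rule comp_assoc[symmetric]) (use h m' in simp_all)
  then have "is_zero_arr C (g \<cdot> m)"
    using zero_arr_comp_left[OF m'(4), of h] h m' by simp
  then show ?thesis
    using kernel_lift[OF g m'(1)] m' c' g' cod_n by auto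
qed

text \<open>The image factorization \<open>f = m \<cdot> e\<close>, with \<open>m\<close> the kernel of the cokernel of \<open>f\<close>, has an
  epimorphic first factor: if \<open>u \<cdot> e = v \<cdot> e\<close>, then \<open>e\<close> factors through the equalizer \<open>j\<close> of
  \<open>u\<close> and \<open>v\<close>, hence \<open>m\<close> factors through the monomorphism \<open>m \<cdot> j\<close>, which makes \<open>j\<close> split epi.\<close>
lemma image_factor_epi:
  assumes c: "is_cokernel C f c" and m: "is_kernel C c m"
    and e: "e \<in> Arr C" "Cod C e = Dom C m" "m \<cdot> e = f"
  shows "epi C e"
proof (rule epiI[OF e(1)])
  note m' = kernelD[OF m]
  have m_mono: "mono C m"
    using m by (rule kernel_mono)
  fix u v
  assume uv: "u \<in> Arr C" "v \<in> Arr C" "Dom C u = Cod C e" "Dom C v = Cod C e" "u \<cdot> e = v \<cdot> e"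
  have "Dom C v = Dom C u" "Cod C v = Cod C u"
    using cod_comp[of e u] cod_comp[of e v] uv e by simp_all
  then obtain j where j: "mono C j" "Cod C j = Dom C u" "u \<cdot> j = v \<cdot> j"
    and lift: "\<And>x. \<lbrakk>x \<in> Arr C; Cod C x = Dom C u; u \<cdot> x = v \<cdot> x\<rbrakk>
                 \<Longrightarrow> \<exists>y. y \<in> hom C (Dom C x) (Dom C j) \<and> j \<cdot> y = x"
    by (rule equalizer_exists[OF uv(1,2)]) blast
  have j_arr: "j \<in> Arr C"
    using j(1) by (rule mono_in_Arr)
  obtain e' where e': "e' \<in> hom C (Dom C e) (Dom C j)" "j \<cdot> e' = e"
    using lift[OF e(1)] uv(3,5) by auto
  have dom_mj: "Dom C (m \<cdot> j) = Dom C j"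
    using j(2) uv(3) e(2) j_arr m' by simp
  have mj: "mono C (m \<cdot> j)"
    using mono_comp[OF m_mono j(1)] j(2) uv(3) e(2) by simp
  have "(m \<cdot> j) \<cdot> e' = f"
    unfolding e(3)[symmetric] e'(2)[symmetric]
    by (rule comp_assoc[symmetric]) (use e' j j_arr m' uv(3) e(2) in simp_all)
  then obtain s where s: "s \<in> hom C (Dom C m) (Dom C (m \<cdot> j))" "(m \<cdot> j) \<cdot> s = m"
    using image_least_subobject[OF c m mj, of e'] e' dom_mj by auto
  have "m \<cdot> j \<cdot> s = m \<cdot> Id C (Dom C m)"
    using comp_assoc[of s j m] s dom_mj j(2) uv(3) e(2) j_arr m' by simp
  then have "j \<cdot> s = Id C (Dom C m)"
    by (rule monoD[OF m_mono, rotated -1]) (use s dom_mj j(2) uv(3) e(2) j_arr m' in simp_all)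
  then have "epi C j"
    using epi_if_right_inverse[OF j_arr, of s] s dom_mj j(2) uv(3) e(2) by simp
  then show "u = v"
    by (rule epiD) (use uv j in simp_all)
qed

lemma image_factorization:
  assumes c: "is_cokernel C f c"
  obtains m e where "is_kernel C c m" "epi C e" "e \<in> hom C (Dom C f) (Dom C m)" "m \<cdot> e = f"
proof -
  note c' = cokernelD[OF c]
  obtain m where m: "is_kernel C c m"
    using ex_kernel[OF c'(1)] by blast
  obtain e where e: "e \<in> hom C (Dom C f) (Dom C m)" "m \<cdot> e = f"
    using kernel_lift[OF m c'(2)] c' by auto
  have "epi C e"
    using image_factor_epi[OF c m] e by simp
  with m e that show ?thesis
    by blast
qed

lemma short_exact_of_epi:
  assumes e: "epi C e" and k: "is_kernel C e k"
  shows "short_exact C k e"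
proof -
  obtain g where "is_cokernel C g e"
    using epi_is_cokernel[OF e] by blast
  then show ?thesis
    using k by (rule short_exact_kernel_of_cokernel)
qed

end

section \<open>Amplitudes along zigzags\<close>

definition span_cost :: "('o, 'm) cat \<Rightarrow> ('o \<Rightarrow> ennreal) \<Rightarrow> 'm \<times> 'm \<Rightarrow> ennreal" where
  "span_cost C \<alpha> p =
     amp_ker C \<alpha> (fst p) + amp_coker C \<alpha> (fst p) + amp_ker C \<alpha> (snd p) + amp_coker C \<alpha> (snd p)"

lemma zigzag_cost_Nil [simp]: "zigzag_cost C \<alpha> [] = 0"
  by (simp add: zigzag_cost_def)

lemma zigzag_cost_Cons [simp]: "zigzag_cost C \<alpha> (p # zs) = span_cost C \<alpha> p + zigzag_cost C \<alpha> zs"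
  by (simp add: zigzag_cost_def span_cost_def)

lemma zigzag_Cons:
  "zigzag C A B (p # zs) \<longleftrightarrow>
     fst p \<in> Arr C \<and> snd p \<in> Arr C \<and> Dom C (fst p) = Dom C (snd p) \<and> Cod C (fst p) = A \<and>
     (if zs = [] then Cod C (snd p) = B else zigzag C (Cod C (snd p)) B zs)"
  by (cases zs) (auto simp: zigzag_def All_less_Suc2 all_conj_distrib)

locale amplitude_on_abelian = abelian C for C :: "('o, 'm) cat" +
  fixes \<alpha> :: "'o \<Rightarrow> ennreal"
  assumes amplitude: "amplitude C \<alpha>"
begin

lemma amplitude_zero_obj: "zero_obj C z \<Longrightarrow> \<alpha> z = 0"
  using amplitude unfolding amplitude_def by blast

lemma amplitude_short_exact:
  assumes "short_exact C f g"
  shows "\<alpha> (Dom C f) \<le> \<alpha> (Cod C f)" "\<alpha> (Cod C g) \<le> \<alpha> (Cod C f)"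
    "\<alpha> (Cod C f) \<le> \<alpha> (Dom C f) + \<alpha> (Cod C g)"
  using amplitude assms unfolding amplitude_def by blast+

lemma amplitude_kernel_bounds:
  assumes k: "is_kernel C f k"
  shows "\<alpha> (Dom C k) \<le> \<alpha> (Dom C f)" and "\<alpha> (Dom C f) \<le> \<alpha> (Dom C k) + \<alpha> (Cod C f)"
proof -
  note k' = kernelD[OF k]
  obtain c where c: "is_cokernel C f c"
    using ex_cokernel[OF k'(2)] by blast
  obtain m e where m: "is_kernel C c m"
    and e: "epi C e" "e \<in> hom C (Dom C f) (Dom C m)" "m \<cdot> e = f"
    using image_factorization[OF c] by blast
  note m' = kernelD[OF m] and c' = cokernelD[OF c]
  have "is_kernel C e k"
    using kernel_of_factor[OF k kernel_mono[OF m]] e by simp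
  with e(1) have ke: "short_exact C k e"
    by (rule short_exact_of_epi)
  have mc: "short_exact C m c"
    using c m by (rule short_exact_kernel_of_cokernel)
  show "\<alpha> (Dom C k) \<le> \<alpha> (Dom C f)"
    using amplitude_short_exact(1)[OF ke] k' by simp
  have "\<alpha> (Dom C f) \<le> \<alpha> (Dom C k) + \<alpha> (Dom C m)"
    using amplitude_short_exact(3)[OF ke] k' e by simp
  also have "\<dots> \<le> \<alpha> (Dom C k) + \<alpha> (Cod C f)"
    using amplitude_short_exact(1)[OF mc] m' c' by (simp add: add_left_mono)
  finally show "\<alpha> (Dom C f) \<le> \<alpha> (Dom C k) + \<alpha> (Cod C f)" .
qed

lemma amplitude_cokernel_bounds:
  assumes c: "is_cokernel C f c"
  shows "\<alpha> (Cod C c) \<le> \<alpha> (Cod C f)" and "\<alpha> (Cod C f) \<le> \<alpha> (Dom C f) + \<alpha> (Cod C c)"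
proof -
  note c' = cokernelD[OF c]
  obtain m e where m: "is_kernel C c m"
    and e: "epi C e" "e \<in> hom C (Dom C f) (Dom C m)" "m \<cdot> e = f"
    using image_factorization[OF c] by blast
  note m' = kernelD[OF m]
  obtain k where k: "is_kernel C e k"
    using ex_kernel e(2) by auto
  have ke: "short_exact C k e"
    using e(1) k by (rule short_exact_of_epi)
  have mc: "short_exact C m c"
    using c m by (rule short_exact_kernel_of_cokernel)
  show "\<alpha> (Cod C c) \<le> \<alpha> (Cod C f)"
    using amplitude_short_exact(2)[OF mc] m' c' by simp
  have "\<alpha> (Cod C f) \<le> \<alpha> (Dom C m) + \<alpha> (Cod C c)"
    using amplitude_short_exact(3)[OF mc] m' c' by simp
  also have "\<dots> \<le> \<alpha> (Dom C f) + \<alpha> (Cod C c)"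
    using amplitude_short_exact(2)[OF ke] kernelD[OF k] e by (simp add: add_right_mono)
  finally show "\<alpha> (Cod C f) \<le> \<alpha> (Dom C f) + \<alpha> (Cod C c)" .
qed

lemma amp_ker_bounds:
  assumes "f \<in> Arr C"
  shows "amp_ker C \<alpha> f \<le> \<alpha> (Dom C f)" and "\<alpha> (Dom C f) \<le> amp_ker C \<alpha> f + \<alpha> (Cod C f)"
proof -
  have "is_kernel C f (SOME k. is_kernel C f k)"
    using ex_kernel[OF assms] by (rule someI_ex)
  then show "amp_ker C \<alpha> f \<le> \<alpha> (Dom C f)" "\<alpha> (Dom C f) \<le> amp_ker C \<alpha> f + \<alpha> (Cod C f)"
    unfolding amp_ker_def by (rule amplitude_kernel_bounds)+
qed

lemma amp_coker_bounds:
  assumes "f \<in> Arr C"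
  shows "amp_coker C \<alpha> f \<le> \<alpha> (Cod C f)" and "\<alpha> (Cod C f) \<le> \<alpha> (Dom C f) + amp_coker C \<alpha> f"
proof -
  have "is_cokernel C f (SOME c. is_cokernel C f c)"
    using ex_cokernel[OF assms] by (rule someI_ex)
  then show "amp_coker C \<alpha> f \<le> \<alpha> (Cod C f)" "\<alpha> (Cod C f) \<le> \<alpha> (Dom C f) + amp_coker C \<alpha> f"
    unfolding amp_coker_def by (rule amplitude_cokernel_bounds)+
qed

lemma span_amplitude_le:
  assumes "l \<in> Arr C" "r \<in> Arr C" "Dom C l = Dom C r"
  shows "\<alpha> (Cod C l) \<le> \<alpha> (Cod C r) + span_cost C \<alpha> (l, r)"
proof -
  have "\<alpha> (Cod C l) \<le> \<alpha> (Dom C r) + amp_coker C \<alpha> l"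
    using amp_coker_bounds(2)[OF assms(1)] assms(3) by simp
  also have "\<dots> \<le> amp_ker C \<alpha> r + \<alpha> (Cod C r) + amp_coker C \<alpha> l"
    using amp_ker_bounds(2)[OF assms(2)] by (rule add_right_mono)
  also have "\<dots> \<le> \<alpha> (Cod C r) + span_cost C \<alpha> (l, r)"
    by (simp add: span_cost_def ac_simps add_increasing)
  finally show ?thesis .
qed

lemma zigzag_amplitude_le: "zigzag C A B zs \<Longrightarrow> \<alpha> A \<le> \<alpha> B + zigzag_cost C \<alpha> zs"
proof (induction zs arbitrary: A)
  case Nil
  then show ?case
    by (simp add: zigzag_def)
next
  case (Cons p zs)
  obtain l r where p: "p = (l, r)"
    by fastforce
  have lr: "l \<in> Arr C" "r \<in> Arr C" "Dom C l = Dom C r" "Cod C l = A"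
    using Cons.prems by (simp_all add: zigzag_Cons p)
  have "\<alpha> (Cod C r) \<le> \<alpha> B + zigzag_cost C \<alpha> zs"
  proof (cases "zs = []")
    case True
    with Cons.prems show ?thesis
      by (simp add: zigzag_Cons p)
  next
    case False
    with Cons.prems show ?thesis
      by (intro Cons.IH) (simp add: zigzag_Cons p)
  qed
  then have "\<alpha> (Cod C r) + span_cost C \<alpha> p \<le> \<alpha> B + zigzag_cost C \<alpha> (p # zs)"
    by (simp add: add_right_mono ac_simps)
  moreover have "\<alpha> A \<le> \<alpha> (Cod C r) + span_cost C \<alpha> p"
    using span_amplitude_le[OF lr(1-3)] lr(4) p by simp
  ultimately show ?case
    by (rule order_trans[rotated])
qed

lemma amplitude_le_path_dist_to_zero_obj:
  assumes "zero_obj C Z"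
  shows "\<alpha> A \<le> path_dist C \<alpha> A Z"
  unfolding path_dist_def
  by (rule Inf_greatest) (use zigzag_amplitude_le amplitude_zero_obj[OF assms] in fastforce)

lemma path_dist_to_zero_obj_le_amplitude:
  assumes A: "A \<in> Obj C" and Z: "zero_obj C Z"
  shows "path_dist C \<alpha> A Z \<le> \<alpha> A"
proof -
  obtain s where s: "s \<in> hom C Z A"
    using ex_arr_from_zero_obj[OF Z A] by blast
  have Z_obj: "Z \<in> Obj C"
    using Z by (rule zero_obj_in_Obj)
  have "zigzag C A Z [(s, Id C Z)]"
    using s Z_obj by (simp add: zigzag_Cons)
  then have "path_dist C \<alpha> A Z \<le> span_cost C \<alpha> (s, Id C Z)"
    unfolding path_dist_def by (force intro: Inf_lower)
  also have "\<dots> \<le> \<alpha> A"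
  proof -
    have "amp_ker C \<alpha> s \<le> 0" "amp_coker C \<alpha> s \<le> \<alpha> A"
      "amp_ker C \<alpha> (Id C Z) \<le> 0" "amp_coker C \<alpha> (Id C Z) \<le> 0"
      using amp_ker_bounds(1)[of s] amp_coker_bounds(1)[of s] amp_ker_bounds(1)[of "Id C Z"]
        amp_coker_bounds(1)[of "Id C Z"] s Z_obj amplitude_zero_obj[OF Z] by simp_all
    then show ?thesis
      by (simp add: span_cost_def)
  qed
  finally show ?thesis .
qed

end

theorem mainTheorem5:
  fixes C :: "('o, 'm) cat" and \<alpha> :: "'o \<Rightarrow> ennreal" and A Z :: 'o
  assumes "abelian_category C"
    and "amplitude C \<alpha>"
    and "A \<in> Obj C"
    and "zero_obj C Z"
  shows "\<alpha> A = path_dist C \<alpha> A Z"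
proof -
  interpret amplitude_on_abelian C \<alpha>
    using assms(1,2) by unfold_locales
  show ?thesis
    using amplitude_le_path_dist_to_zero_obj[OF assms(4)]
      path_dist_to_zero_obj_le_amplitude[OF assms(3,4)] by (rule antisym)
qed

end
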